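(* Let $\alpha\ge p>0$ and let $f$ be a measurable, non-negative, non-decreasing function on $(0,\infty)$. If $p\ge1$, then $$\int_0^\infty\Big(\int_0^x f(y)dy\Big)^p x^{-\alpha}\frac{dx}{x}\ge p\,B(p,\alpha-p+1)\int_0^\infty (xf(x))^p x^{-\alpha}\frac{dx}{x},$$ and if $0<p\le1$ the inequality holds in the reversed direction. In both cases the constant $p\,B(p,\alpha-p+1)$ is sharp (equality holds for $f=A\chi_{(c,\infty)}$, $c>0$, $A>0$).
   Context: $B(u,v)=\int_0^1 t^{u-1}(1-t)^{v-1}dt$ is the Euler beta function. *)

theory Defs
  imports "HOL-Analysis.Analysis"
begin

definition hardy_lhs :: "real \<Rightarrow> real \<Rightarrow> (real \<Rightarrow> real) \<Rightarrow> ennreal" where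
  "hardy_lhs p \<alpha> f =
     (\<integral>\<^sup>+ x \<in> {0<..}. ennreal (((LBINT y:{0<..x}. f y) powr p) * x powr (-\<alpha>) / x) \<partial>lborel)"

definition hardy_rhs :: "real \<Rightarrow> real \<Rightarrow> (real \<Rightarrow> real) \<Rightarrow> ennreal" where
  "hardy_rhs p \<alpha> f =
     (\<integral>\<^sup>+ x \<in> {0<..}. ennreal (((x * f x) powr p) * x powr (-\<alpha>) / x) \<partial>lborel)"

end

theory Submission
  imports Defs
begin

text \<open>Extend \<open>f\<close> by \<open>0\<close> to a non-decreasing \<open>g\<close> on the real line and let \<open>F\<close> be its
  primitive from \<open>0\<close>. Pushing the measure \<open>g(y) dy\<close> on \<open>(0, x]\<close> forward along the continuous
  monotone \<open>F\<close> gives Lebesgue measure on \<open>[0, F(x)]\<close>, so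
  \<open>F(x)^p = \<integral> g(y) p (F(x) - F(y))^(p-1) dy\<close> over \<open>(0, x]\<close>. Since \<open>F(x) - F(y) \<ge> (x - y) g(y)\<close>,
  this integrand dominates (\<open>p \<ge> 1\<close>) or is dominated by (\<open>p \<le> 1\<close>) the kernel integrand
  \<open>p (x - y)^(p-1) g(y)^p\<close>, with equality when \<open>g\<close> is constant beyond its jump, as for
  \<open>A \<chi>(c,\<infinity>)\<close>. Integrated against \<open>x^(-\<alpha>-1) dx\<close>, the kernel integral becomes, by the
  substitutions \<open>y = x t\<close> and (after Tonelli) \<open>x = u / t\<close>, the right-hand side times
  \<open>p \<integral>\<^sub>0\<^sup>1 t^(\<alpha>-p) (1 - t)^(p-1) dt = p B(p, \<alpha> - p + 1)\<close>.\<close>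

section \<open>Power-kernel integrals\<close>

lemma powr_kernel_factor:
  fixes c d p :: real
  assumes "0 \<le> c" "0 \<le> d"
  shows "p * d powr (p - 1) * c powr p = c * (p * (d * c) powr (p - 1))"
proof (cases "c = 0 \<or> d = 0")
  case False
  with assms have "c powr p = c * c powr (p - 1)"
    by (simp add: powr_diff)
  with False assms show ?thesis
    by (simp add: powr_mult)
qed auto

lemma nn_integral_powr_kernel:
  fixes p T :: real
  assumes p: "0 < p" and T: "0 \<le> T"
  shows "(\<integral>\<^sup>+t\<in>{0..T}. ennreal (p * (T - t) powr (p - 1)) \<partial>lborel) = ennreal (T powr p)"
proof -
  have "(\<integral>\<^sup>+t\<in>{0..T}. ennreal (p * (T - t) powr (p - 1)) \<partial>lborel) =
      ennreal \<bar>-1\<bar> * (\<integral>\<^sup>+u. ennreal (p * (T - (T + (-1) * u)) powr (p - 1)) * indicator {0..T} (T + (-1) * u) \<partial>lborel)"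
    by (rule nn_integral_real_affine) auto
  also have "\<dots> = (\<integral>\<^sup>+u. ennreal (indicator {0..T} u * (p * u powr (p - 1))) \<partial>lborel)"
    by (auto simp: indicator_def intro!: nn_integral_cong)
  also have "\<dots> = ennreal (p * (T powr (p - 1 + 1) / (p - 1 + 1)))"
  proof (rule nn_integral_has_integral_lebesgue)
    have "((\<lambda>u. u powr (p - 1)) has_integral (T powr (p - 1 + 1) / (p - 1 + 1))) {0..T}"
      by (rule has_integral_powr_from_0) (use p T in auto)
    then show "((\<lambda>u. p * u powr (p - 1)) has_integral (p * (T powr (p - 1 + 1) / (p - 1 + 1)))) {0..T}"
      by (rule has_integral_mult_right)
  qed (use p in auto)
  finally show ?thesis
    using p by simp
qed

lemma nn_integral_Beta:
  assumes "0 < a" "0 < b"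
  shows "(\<integral>\<^sup>+t\<in>{0<..1}. ennreal (t powr (a - 1) * (1 - t) powr (b - 1)) \<partial>lborel) = ennreal (Beta a b)"
proof -
  have "(\<integral>\<^sup>+t\<in>{0<..1}. ennreal (t powr (a - 1) * (1 - t) powr (b - 1)) \<partial>lborel) =
      (\<integral>\<^sup>+t. ennreal (indicator {0..1} t * (t powr (a - 1) * (1 - t) powr (b - 1))) \<partial>lborel)"
    by (intro nn_integral_cong) (auto simp: indicator_def)
  also have "\<dots> = ennreal (Beta a b)"
    by (rule nn_integral_has_integral_lebesgue[OF _ has_integral_Beta_real[OF assms]]) auto
  finally show ?thesis .
qed

text \<open>\<open>\<Gamma>(p + 1)\<close> times the Riemann-Liouville integral of order \<open>p\<close> of \<open>\<phi>\<close>.\<close>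
definition power_kernel_integral :: "real \<Rightarrow> (real \<Rightarrow> ennreal) \<Rightarrow> real \<Rightarrow> ennreal" where
  "power_kernel_integral p \<phi> x = (\<integral>\<^sup>+y\<in>{0<..x}. ennreal (p * (x - y) powr (p - 1)) * \<phi> y \<partial>lborel)"

lemma power_kernel_integral_rescaled:
  assumes x: "0 < x" and [measurable]: "\<phi> \<in> borel_measurable borel"
  shows "power_kernel_integral p \<phi> x =
    (\<integral>\<^sup>+t\<in>{0<..1}. ennreal (p * x powr p * (1 - t) powr (p - 1)) * \<phi> (x * t) \<partial>lborel)"
proof -
  have "power_kernel_integral p \<phi> x = ennreal \<bar>x\<bar> *
      (\<integral>\<^sup>+t. ennreal (p * (x - (0 + x * t)) powr (p - 1)) * \<phi> (0 + x * t) * indicator {0<..x} (0 + x * t) \<partial>lborel)"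
    unfolding power_kernel_integral_def by (rule nn_integral_real_affine) (use x in auto)
  also have "\<dots> = (\<integral>\<^sup>+t. ennreal x * (ennreal (p * (x - x * t) powr (p - 1)) * \<phi> (x * t) * indicator {0<..x} (x * t)) \<partial>lborel)"
    using x by (subst nn_integral_cmult) auto
  also have "\<dots> = (\<integral>\<^sup>+t\<in>{0<..1}. ennreal (p * x powr p * (1 - t) powr (p - 1)) * \<phi> (x * t) \<partial>lborel)"
  proof (intro nn_integral_cong)
    fix t :: real
    have scale: "x * (p * (x - x * t) powr (p - 1)) = p * x powr p * (1 - t) powr (p - 1)" if "t \<le> 1"
    proof -
      have "(x - x * t) powr (p - 1) = x powr (p - 1) * (1 - t) powr (p - 1)"
        using x that by (simp add: powr_mult[symmetric] right_diff_distrib)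
      moreover have "x * x powr (p - 1) = x powr p"
        using x by (simp add: powr_diff)
      ultimately show ?thesis by (simp add: ac_simps)
    qed
    have range: "x * t \<in> {0<..x} \<longleftrightarrow> t \<in> {0<..1}"
      using x by (auto simp: zero_less_mult_iff)
    show "ennreal x * (ennreal (p * (x - x * t) powr (p - 1)) * \<phi> (x * t) * indicator {0<..x} (x * t)) =
        ennreal (p * x powr p * (1 - t) powr (p - 1)) * \<phi> (x * t) * indicator {0<..1} t"
    proof (cases "t \<in> {0<..1}")
      case True
      then have "ennreal x * ennreal (p * (x - x * t) powr (p - 1)) = ennreal (p * x powr p * (1 - t) powr (p - 1))"
        using x by (simp add: scale[symmetric] ennreal_mult')
      then show ?thesis
        using True range by (simp add: mult.assoc[symmetric])
    qed (use range in simp)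
  qed
  finally show ?thesis .
qed

lemma nn_integral_powr_dilation:
  assumes t: "0 < t" and [measurable]: "\<phi> \<in> borel_measurable borel"
  shows "(\<integral>\<^sup>+x\<in>{0<..}. ennreal (x powr r) * \<phi> (x * t) \<partial>lborel) =
    ennreal (t powr (-r - 1)) * (\<integral>\<^sup>+u\<in>{0<..}. ennreal (u powr r) * \<phi> u \<partial>lborel)"
proof -
  have "(\<integral>\<^sup>+u\<in>{0<..}. ennreal (u powr r) * \<phi> u \<partial>lborel) = ennreal \<bar>t\<bar> *
      (\<integral>\<^sup>+x. ennreal ((0 + t * x) powr r) * \<phi> (0 + t * x) * indicator {0<..} (0 + t * x) \<partial>lborel)"
    by (rule nn_integral_real_affine) (use t in auto)
  also have "\<dots> = (\<integral>\<^sup>+x. ennreal t * (ennreal ((t * x) powr r) * \<phi> (t * x) * indicator {0<..} (t * x)) \<partial>lborel)"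
    using t by (subst nn_integral_cmult) auto
  also have "\<dots> = (\<integral>\<^sup>+x. ennreal (t powr (r + 1)) * (ennreal (x powr r) * \<phi> (x * t) * indicator {0<..} x) \<partial>lborel)"
  proof (intro nn_integral_cong)
    fix x :: real
    show "ennreal t * (ennreal ((t * x) powr r) * \<phi> (t * x) * indicator {0<..} (t * x)) =
        ennreal (t powr (r + 1)) * (ennreal (x powr r) * \<phi> (x * t) * indicator {0<..} x)"
    proof (cases "0 < x")
      case True
      have "t * (t * x) powr r = t powr (r + 1) * x powr r"
        using t True by (simp add: powr_mult powr_add)
      then show ?thesis
        using t True by (simp add: ennreal_mult'[symmetric] mult.assoc[symmetric] mult.commute)
    qed (use t in \<open>simp add: zero_less_mult_iff\<close>)
  qed
  also have "\<dots> = ennreal (t powr (r + 1)) * (\<integral>\<^sup>+x\<in>{0<..}. ennreal (x powr r) * \<phi> (x * t) \<partial>lborel)"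
    by (rule nn_integral_cmult) measurable
  finally have "ennreal (t powr (-r - 1)) * (\<integral>\<^sup>+u\<in>{0<..}. ennreal (u powr r) * \<phi> u \<partial>lborel) =
      ennreal (t powr (-r - 1) * t powr (r + 1)) * (\<integral>\<^sup>+x\<in>{0<..}. ennreal (x powr r) * \<phi> (x * t) \<partial>lborel)"
    by (simp add: ennreal_mult' mult.assoc)
  also have "t powr (-r - 1) * t powr (r + 1) = 1"
    using t by (simp add: powr_add[symmetric])
  finally show ?thesis by simp
qed

lemma power_kernel_integral_weighted_rescaled:
  assumes x: "0 < x" and \<phi>: "\<phi> \<in> borel_measurable borel"
  shows "power_kernel_integral p \<phi> x * ennreal (x powr (-\<alpha> - 1)) =
    (\<integral>\<^sup>+t\<in>{0<..1}. ennreal (p * (1 - t) powr (p - 1)) * (ennreal (x powr (p - \<alpha> - 1)) * \<phi> (x * t)) \<partial>lborel)"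
proof -
  have "power_kernel_integral p \<phi> x * ennreal (x powr (-\<alpha> - 1)) =
      (\<integral>\<^sup>+t\<in>{0<..1}. ennreal (p * x powr p * (1 - t) powr (p - 1)) * \<phi> (x * t) * ennreal (x powr (-\<alpha> - 1)) \<partial>lborel)"
    unfolding power_kernel_integral_rescaled[OF x \<phi>]
    by (subst nn_integral_multc[symmetric]) (use \<phi> in measurable, simp add: mult.commute mult.left_commute)
  also have "\<dots> = (\<integral>\<^sup>+t\<in>{0<..1}. ennreal (p * (1 - t) powr (p - 1)) * (ennreal (x powr (p - \<alpha> - 1)) * \<phi> (x * t)) \<partial>lborel)"
  proof (intro nn_integral_cong)
    fix t :: real
    have "ennreal (p * x powr p * (1 - t) powr (p - 1)) * ennreal (x powr (-\<alpha> - 1)) =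
        ennreal (p * x powr p * (1 - t) powr (p - 1) * x powr (-\<alpha> - 1))"
      by (rule ennreal_mult''[symmetric]) simp
    also have "p * x powr p * (1 - t) powr (p - 1) * x powr (-\<alpha> - 1) = p * (1 - t) powr (p - 1) * x powr (p - \<alpha> - 1)"
      by (simp add: powr_add[symmetric] algebra_simps)
    also have "ennreal \<dots> = ennreal (p * (1 - t) powr (p - 1)) * ennreal (x powr (p - \<alpha> - 1))"
      by (rule ennreal_mult'') simp
    finally have "ennreal (p * x powr p * (1 - t) powr (p - 1)) * ennreal (x powr (-\<alpha> - 1)) =
        ennreal (p * (1 - t) powr (p - 1)) * ennreal (x powr (p - \<alpha> - 1))" .
    then show "ennreal (p * x powr p * (1 - t) powr (p - 1)) * \<phi> (x * t) * ennreal (x powr (-\<alpha> - 1)) * indicator {0<..1} t =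
        ennreal (p * (1 - t) powr (p - 1)) * (ennreal (x powr (p - \<alpha> - 1)) * \<phi> (x * t)) * indicator {0<..1} t"
      by (simp add: mult.commute mult.left_commute)
  qed
  finally show ?thesis .
qed

lemma nn_integral_power_kernel_integral_weighted:
  assumes p: "0 < p" and p_\<alpha>: "p < \<alpha> + 1" and \<phi>[measurable]: "\<phi> \<in> borel_measurable borel"
  shows "(\<integral>\<^sup>+x\<in>{0<..}. power_kernel_integral p \<phi> x * ennreal (x powr (-\<alpha> - 1)) \<partial>lborel) =
    ennreal (p * Beta p (\<alpha> - p + 1)) * (\<integral>\<^sup>+y\<in>{0<..}. ennreal (y powr (p - \<alpha> - 1)) * \<phi> y \<partial>lborel)"
    (is "_ = _ * ?R")
proof -
  define B where "B t = t powr (\<alpha> - p) * (1 - t) powr (p - 1)" for t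
  have [measurable]: "B \<in> borel_measurable borel"
    unfolding B_def by measurable
  define H where "H x t = ennreal (p * (1 - t) powr (p - 1)) * indicator {0<..1} t *
      (ennreal (x powr (p - \<alpha> - 1)) * \<phi> (x * t) * indicator {0<..} x)" for x t
  have [measurable]: "(\<lambda>(x, t). H x t) \<in> borel_measurable (lborel \<Otimes>\<^sub>M lborel)"
    unfolding H_def by measurable
  have "(\<integral>\<^sup>+x\<in>{0<..}. power_kernel_integral p \<phi> x * ennreal (x powr (-\<alpha> - 1)) \<partial>lborel) =
      (\<integral>\<^sup>+x. \<integral>\<^sup>+t. H x t \<partial>lborel \<partial>lborel)"
    unfolding H_def
    by (intro nn_integral_cong) (simp add: nn_integral_multc power_kernel_integral_weighted_rescaled[OF _ \<phi>] mult_ac split: split_indicator)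
  also have "\<dots> = (\<integral>\<^sup>+t. \<integral>\<^sup>+x. H x t \<partial>lborel \<partial>lborel)"
    by (rule lborel_pair.Fubini') measurable
  also have "\<dots> = (\<integral>\<^sup>+t. ennreal p * (ennreal (B t) * indicator {0<..1} t) * ?R \<partial>lborel)"
  proof (intro nn_integral_cong)
    fix t :: real
    show "(\<integral>\<^sup>+x. H x t \<partial>lborel) = ennreal p * (ennreal (B t) * indicator {0<..1} t) * ?R"
    proof (cases "t \<in> {0<..1}")
      case True
      then have "(\<integral>\<^sup>+x. H x t \<partial>lborel) = ennreal (p * (1 - t) powr (p - 1)) * (ennreal (t powr (\<alpha> - p)) * ?R)"
        using nn_integral_powr_dilation[OF _ \<phi>, of t "p - \<alpha> - 1"] by (simp add: H_def nn_integral_cmult)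
      moreover have "ennreal (p * (1 - t) powr (p - 1)) * ennreal (t powr (\<alpha> - p)) = ennreal p * ennreal (B t)"
        using p by (simp add: B_def ennreal_mult'[symmetric] mult_ac)
      ultimately show ?thesis
        using True by (simp add: mult.assoc[symmetric])
    qed (simp add: H_def)
  qed
  also have "\<dots> = (\<integral>\<^sup>+t. ennreal p * (ennreal (B t) * indicator {0<..1} t) \<partial>lborel) * ?R"
    by (rule nn_integral_multc) measurable
  also have "\<dots> = ennreal p * (\<integral>\<^sup>+t\<in>{0<..1}. ennreal (B t) \<partial>lborel) * ?R"
    by (subst nn_integral_cmult) auto
  also have "(\<integral>\<^sup>+t\<in>{0<..1}. ennreal (B t) \<partial>lborel) = ennreal (Beta p (\<alpha> - p + 1))"
    using nn_integral_Beta[of "\<alpha> - p + 1" p] p p_\<alpha> by (simp add: B_def Beta_commute)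
  finally show ?thesis
    by (simp only: ennreal_mult'[OF less_imp_le[OF p]])
qed

section \<open>Primitives of monotone functions\<close>

lemma set_integrable_Ioc_mono:
  fixes g :: "real \<Rightarrow> real"
  assumes "mono g"
  shows "set_integrable lborel {a<..b} g"
  unfolding set_integrable_def
proof (rule integrableI_bounded_set_indicator[where B = "\<bar>g a\<bar> + \<bar>g b\<bar>"])
  show "g \<in> borel_measurable lborel"
    using borel_measurable_mono[OF assms] by simp
  show "emeasure lborel {a<..b} < \<infinity>"
    by (cases "a \<le> b") (simp_all add: emeasure_lborel_Ioc)
  show "AE x\<in>{a<..b} in lborel. norm (g x) \<le> \<bar>g a\<bar> + \<bar>g b\<bar>"
  proof (intro AE_I2 impI)
    fix x assume "x \<in> {a<..b}"
    then have "g a \<le> g x" "g x \<le> g b"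
      using assms by (auto intro: monoD)
    then show "norm (g x) \<le> \<bar>g a\<bar> + \<bar>g b\<bar>" by simp
  qed
qed simp

lemma set_integral_Ioc_mono_bounds:
  fixes g :: "real \<Rightarrow> real"
  assumes g: "mono g" and "a \<le> b"
  shows "(b - a) * g a \<le> (LBINT y:{a<..b}. g y)" and "(LBINT y:{a<..b}. g y) \<le> (b - a) * g b"
proof -
  have const: "(LBINT y:{a<..b}. c) = (b - a) * c" for c :: real
    using \<open>a \<le> b\<close> by (simp add: set_integral_const measure_lborel_Ioc emeasure_lborel_Ioc)
  have const_integrable: "set_integrable lborel {a<..b} (\<lambda>_. c :: real)" for c
    by (rule set_integrable_Ioc_mono) (simp add: mono_def)
  have "(LBINT y:{a<..b}. g a) \<le> (LBINT y:{a<..b}. g y)"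
    by (rule set_integral_mono[OF const_integrable set_integrable_Ioc_mono[OF g]]) (auto intro: monoD[OF g])
  then show "(b - a) * g a \<le> (LBINT y:{a<..b}. g y)" by (simp add: const)
  have "(LBINT y:{a<..b}. g y) \<le> (LBINT y:{a<..b}. g b)"
    by (rule set_integral_mono[OF set_integrable_Ioc_mono[OF g] const_integrable]) (auto intro: monoD[OF g])
  then show "(LBINT y:{a<..b}. g y) \<le> (b - a) * g b" by (simp add: const)
qed

lemma continuous_mono_superlevel:
  fixes F :: "real \<Rightarrow> real"
  assumes mono: "mono F" and cont: "continuous_on {a..b} F" and Fa: "F a \<le> s" and Fb: "s < F b"
  obtains z where "a \<le> z" "z \<le> b" "F z = s" "\<And>y. y \<le> b \<Longrightarrow> s < F y \<longleftrightarrow> z < y"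
proof -
  have ab: "a \<le> b"
  proof (rule ccontr)
    assume "\<not> a \<le> b"
    then have "F b \<le> F a" using mono by (simp add: monoD)
    with Fa Fb show False by linarith
  qed
  define S where "S = {a..b} \<inter> F -` {..s}"
  have "closed S"
    unfolding S_def by (intro continuous_closed_preimage cont) auto
  moreover have "a \<in> S" and bdd: "bdd_above S"
    using ab Fa unfolding S_def by (auto intro: bdd_aboveI[where M = b])
  ultimately have z: "Sup S \<in> S"
    by (intro closed_contains_Sup) auto
  have upper: "y \<le> Sup S" if "y \<in> S" for y
    using that bdd by (rule cSup_upper)
  obtain w where w: "a \<le> w" "w \<le> b" "F w = s"
    using IVT'[of F a s b] Fa Fb ab cont by auto
  then have "w \<in> S" unfolding S_def by simp
  then have "s \<le> F (Sup S)"
    using w(3) upper mono by (metis monoD)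
  with z have Fz: "F (Sup S) = s"
    unfolding S_def by simp
  have "Sup S \<in> {a..b}"
    using z unfolding S_def by simp
  moreover have "s < F y \<longleftrightarrow> Sup S < y" if "y \<le> b" for y
  proof
    assume "s < F y"
    then show "Sup S < y"
      using Fz mono by (metis leI monoD not_less)
  next
    assume "Sup S < y"
    then have "y \<notin> S"
      using upper by (meson not_less)
    with \<open>Sup S < y\<close> z that show "s < F y"
      unfolding S_def by auto
  qed
  ultimately show thesis
    using that[of "Sup S"] Fz by auto
qed

locale mono_vanishing_nonpos =
  fixes g :: "real \<Rightarrow> real"
  assumes mono: "mono g" and vanishing: "\<And>y. y \<le> 0 \<Longrightarrow> g y = 0"
begin

lemma nonneg: "0 \<le> g y"
  using vanishing[of 0] monoD[OF mono, of 0 y] vanishing[of y] by (cases "y \<le> 0") auto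

lemma borel_measurable [measurable]: "g \<in> borel_measurable borel"
  using mono by (rule borel_measurable_mono)

lemma set_integral_Ioc_nonneg: "0 \<le> (LBINT t:{a<..b}. g t)"
  unfolding set_lebesgue_integral_def by (intro Bochner_Integration.integral_nonneg) (simp add: nonneg)

lemma nn_integral_Ioc: "(\<integral>\<^sup>+y\<in>{a<..b}. ennreal (g y) \<partial>lborel) = ennreal (LBINT t:{a<..b}. g t)"
proof -
  have "integrable lborel (\<lambda>y. indicator {a<..b} y * g y)"
    using set_integrable_Ioc_mono[OF mono] by (simp add: set_integrable_def)
  then have "(\<integral>\<^sup>+y. ennreal (indicator {a<..b} y * g y) \<partial>lborel) = ennreal (LBINT y. indicator {a<..b} y * g y)"
    by (rule nn_integral_eq_integral) (simp add: nonneg)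
  then show ?thesis
    by (simp add: set_lebesgue_integral_def nn_integral_set_ennreal mult.commute)
qed

definition primitive :: "real \<Rightarrow> real" where
  "primitive x = (LBINT t:{0<..x}. g t)"

lemma primitive_nonpos: "x \<le> 0 \<Longrightarrow> primitive x = 0"
  by (simp add: primitive_def set_lebesgue_integral_def)

lemma primitive_nonneg: "0 \<le> primitive x"
  unfolding primitive_def by (rule set_integral_Ioc_nonneg)

lemma primitive_split:
  assumes "0 \<le> a" "a \<le> b"
  shows "primitive b = primitive a + (LBINT t:{a<..b}. g t)"
proof -
  have "{0<..b} = {0<..a} \<union> {a<..b}"
    using assms by auto
  then show ?thesis
    unfolding primitive_def using set_integral_Un[of "{0<..a}" "{a<..b}" lborel g]
    by (simp add: set_integrable_Ioc_mono[OF mono])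
qed

lemma primitive_increment_lower_bound:
  assumes "0 \<le> y" "y \<le> x"
  shows "(x - y) * g y \<le> primitive x - primitive y"
  using primitive_split[OF assms] set_integral_Ioc_mono_bounds(1)[OF mono assms(2)] by simp

lemma mono_primitive: "mono primitive"
proof
  fix a b :: real assume "a \<le> b"
  show "primitive a \<le> primitive b"
  proof (cases "a \<le> 0")
    case True
    then show ?thesis using primitive_nonpos primitive_nonneg by simp
  next
    case False
    then show ?thesis
      using primitive_split[of a b] \<open>a \<le> b\<close> set_integral_Ioc_nonneg by simp
  qed
qed

lemma borel_measurable_primitive [measurable]: "primitive \<in> borel_measurable borel"
  using mono_primitive by (rule borel_measurable_mono)

lemma primitive_lipschitz: "(g x)-lipschitz_on {0..x} primitive"
proof (rule lipschitz_onI)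
  show "0 \<le> g x" by (rule nonneg)
next
  have le: "dist (primitive a) (primitive b) \<le> g x * dist a b" if "0 \<le> a" "a \<le> b" "b \<le> x" for a b
  proof -
    have "dist (primitive a) (primitive b) = (LBINT t:{a<..b}. g t)"
      using primitive_split[OF that(1,2)] set_integral_Ioc_nonneg by (simp add: dist_real_def)
    also have "\<dots> \<le> (b - a) * g b"
      using set_integral_Ioc_mono_bounds(2)[OF mono that(2)] .
    also have "\<dots> \<le> g x * dist a b"
      using that monoD[OF mono, of b x] by (simp add: dist_real_def mult.commute mult_right_mono)
    finally show ?thesis .
  qed
  fix a b assume "a \<in> {0..x}" "b \<in> {0..x}"
  then show "dist (primitive a) (primitive b) \<le> g x * dist a b"
    using le[of a b] le[of b a] by (cases "a \<le> b") (auto simp: dist_commute)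
qed

lemma continuous_on_primitive: "continuous_on {0..x} primitive"
  using primitive_lipschitz by (rule lipschitz_on_continuous_on)

lemma primitive_superlevel_integral:
  assumes x: "0 \<le> x"
  shows "(\<integral>\<^sup>+y\<in>{0<..x} \<inter> primitive -` {s<..}. ennreal (g y) \<partial>lborel) =
    emeasure lborel ({0..primitive x} \<inter> {s<..})"
proof -
  have le_x: "primitive y \<le> primitive x" if "y \<le> x" for y
    using mono_primitive that by (rule monoD)
  consider "s < 0" | "primitive x \<le> s" | "0 \<le> s" "s < primitive x"
    by linarith
  then show ?thesis
  proof cases
    case 1
    then have "{0<..x} \<inter> primitive -` {s<..} = {0<..x}" "{0..primitive x} \<inter> {s<..} = {0..primitive x}"
      using primitive_nonneg by (auto intro: less_le_trans)
    then show ?thesis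
      using primitive_nonneg[of x] nn_integral_Ioc[where a = 0 and b = x] by (simp add: primitive_def)
  next
    case 2
    then have "{0<..x} \<inter> primitive -` {s<..} = {}" "{0..primitive x} \<inter> {s<..} = {}"
      using le_x by force+
    then show ?thesis by simp
  next
    case 3
    obtain z where z: "0 \<le> z" "z \<le> x" "primitive z = s" and level: "\<And>y. y \<le> x \<Longrightarrow> s < primitive y \<longleftrightarrow> z < y"
      using continuous_mono_superlevel[OF mono_primitive continuous_on_primitive[of x], where s = s] 3 primitive_nonpos[of 0]
      by auto
    have "{0<..x} \<inter> primitive -` {s<..} = {z<..x}"
      using level z(1) by auto
    moreover have "{0..primitive x} \<inter> {s<..} = {s<..primitive x}"
      using 3 by auto
    moreover have "primitive x = s + (LBINT t:{z<..x}. g t)"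
      using primitive_split[OF z(1,2)] z(3) by simp
    ultimately show ?thesis
      using 3 by (simp add: nn_integral_Ioc emeasure_lborel_Ioc)
  qed
qed

lemma distr_primitive:
  assumes "0 \<le> x"
  shows "distr (density lborel (\<lambda>y. ennreal (g y) * indicator {0<..x} y)) borel primitive =
    density lborel (indicator {0..primitive x})"
proof (rule measure_eqI_lessThan)
  have density_tail: "emeasure (density lborel (indicator {0..primitive x})) {s<..} =
      emeasure lborel ({0..primitive x} \<inter> {s<..})" for s
    by (subst emeasure_density)
      (auto simp: nn_integral_indicator[symmetric] indicator_inter_arith intro!: nn_integral_cong)
  fix s :: real
  have "emeasure (distr (density lborel (\<lambda>y. ennreal (g y) * indicator {0<..x} y)) borel primitive) {s<..} =
      emeasure (density lborel (\<lambda>y. ennreal (g y) * indicator {0<..x} y)) (primitive -` {s<..})"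
    by (subst emeasure_distr) auto
  also have "\<dots> = (\<integral>\<^sup>+y\<in>{0<..x} \<inter> primitive -` {s<..}. ennreal (g y) \<partial>lborel)"
    using measurable_sets_borel[OF borel_measurable_primitive, of "{s<..}"]
    by (subst emeasure_density) (auto simp: indicator_inter_arith mult.assoc)
  also have "\<dots> = emeasure (density lborel (indicator {0..primitive x})) {s<..}"
    unfolding density_tail by (rule primitive_superlevel_integral[OF assms])
  finally show "emeasure (distr (density lborel (\<lambda>y. ennreal (g y) * indicator {0<..x} y)) borel primitive) {s<..} =
      emeasure (density lborel (indicator {0..primitive x})) {s<..}" .
  moreover have "emeasure lborel ({0..primitive x} \<inter> {s<..}) \<le> emeasure lborel {0..primitive x}"
    by (rule emeasure_mono) auto
  ultimately show "emeasure (distr (density lborel (\<lambda>y. ennreal (g y) * indicator {0<..x} y)) borel primitive) {s<..} < \<infinity>"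
    using primitive_nonneg[of x] by (simp add: density_tail top.not_eq_extremum le_less_trans)
qed simp_all

lemma nn_integral_primitive_substitution:
  assumes x: "0 \<le> x" and [measurable]: "h \<in> borel_measurable borel"
  shows "(\<integral>\<^sup>+y\<in>{0<..x}. ennreal (g y) * h (primitive y) \<partial>lborel) = (\<integral>\<^sup>+t\<in>{0..primitive x}. h t \<partial>lborel)"
proof -
  let ?N = "density lborel (\<lambda>y. ennreal (g y) * indicator {0<..x} y)"
  have "(\<integral>\<^sup>+y\<in>{0<..x}. ennreal (g y) * h (primitive y) \<partial>lborel) =
      (\<integral>\<^sup>+y. ennreal (g y) * indicator {0<..x} y * h (primitive y) \<partial>lborel)"
    by (simp only: mult.commute mult.left_commute)
  also have "\<dots> = (\<integral>\<^sup>+y. h (primitive y) \<partial>?N)"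
    by (rule nn_integral_density[symmetric]) measurable
  also have "\<dots> = (\<integral>\<^sup>+t. h t \<partial>distr ?N borel primitive)"
    by (rule nn_integral_distr[symmetric]) measurable
  also have "\<dots> = (\<integral>\<^sup>+t. indicator {0..primitive x} t * h t \<partial>lborel)"
    unfolding distr_primitive[OF x] by (rule nn_integral_density) measurable
  finally show ?thesis
    by (simp only: mult.commute)
qed

lemma primitive_powr_eq_integral:
  assumes p: "0 < p" and x: "0 \<le> x"
  shows "ennreal (primitive x powr p) =
    (\<integral>\<^sup>+y\<in>{0<..x}. ennreal (g y * (p * (primitive x - primitive y) powr (p - 1))) \<partial>lborel)"
proof -
  have "ennreal (primitive x powr p) =
      (\<integral>\<^sup>+y\<in>{0<..x}. ennreal (g y) * ennreal (p * (primitive x - primitive y) powr (p - 1)) \<partial>lborel)"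
    using nn_integral_primitive_substitution[OF x, of "\<lambda>t. ennreal (p * (primitive x - t) powr (p - 1))"]
      nn_integral_powr_kernel[OF p primitive_nonneg[of x]]
    by (simp add: mult.assoc)
  also have "\<dots> = (\<integral>\<^sup>+y\<in>{0<..x}. ennreal (g y * (p * (primitive x - primitive y) powr (p - 1))) \<partial>lborel)"
    by (simp add: ennreal_mult'[OF nonneg])
  finally show ?thesis .
qed

lemma power_kernel_integral_powr_eq:
  assumes "0 < p"
  shows "power_kernel_integral p (\<lambda>y. ennreal (g y powr p)) x =
    (\<integral>\<^sup>+y\<in>{0<..x}. ennreal (g y * (p * ((x - y) * g y) powr (p - 1))) \<partial>lborel)"
  unfolding power_kernel_integral_def
proof (intro nn_integral_cong)
  fix y :: real
  show "ennreal (p * (x - y) powr (p - 1)) * ennreal (g y powr p) * indicator {0<..x} y =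
      ennreal (g y * (p * ((x - y) * g y) powr (p - 1))) * indicator {0<..x} y"
  proof (cases "y \<in> {0<..x}")
    case True
    have "ennreal (p * (x - y) powr (p - 1)) * ennreal (g y powr p) = ennreal (p * (x - y) powr (p - 1) * g y powr p)"
      using \<open>0 < p\<close> by (intro ennreal_mult'[symmetric]) simp
    also have "p * (x - y) powr (p - 1) * g y powr p = g y * (p * ((x - y) * g y) powr (p - 1))"
      using True by (intro powr_kernel_factor nonneg) simp
    finally show ?thesis
      using True by simp
  qed simp
qed

lemma power_kernel_integral_le_primitive_powr:
  assumes p: "1 \<le> p" and x: "0 < x"
  shows "power_kernel_integral p (\<lambda>y. ennreal (g y powr p)) x \<le> ennreal (primitive x powr p)"
proof -
  have "g y * (p * ((x - y) * g y) powr (p - 1)) \<le> g y * (p * (primitive x - primitive y) powr (p - 1))"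
    if "y \<in> {0<..x}" for y
    using primitive_increment_lower_bound[of y x] that p nonneg[of y]
    by (intro mult_left_mono powr_mono2) auto
  moreover have "0 < p"
    using p by simp
  ultimately show ?thesis
    unfolding power_kernel_integral_powr_eq[OF \<open>0 < p\<close>] primitive_powr_eq_integral[OF \<open>0 < p\<close> less_imp_le[OF x]]
    by (intro nn_integral_mono) (auto simp: indicator_def intro!: ennreal_leI)
qed

lemma primitive_powr_le_power_kernel_integral:
  assumes p: "0 < p" "p \<le> 1" and x: "0 < x"
  shows "ennreal (primitive x powr p) \<le> power_kernel_integral p (\<lambda>y. ennreal (g y powr p)) x"
proof -
  have "g y * (p * (primitive x - primitive y) powr (p - 1)) \<le> g y * (p * ((x - y) * g y) powr (p - 1))"
    if y: "y \<in> {0<..x}" for y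
  proof (cases "y < x \<and> 0 < g y")
    case True
    then show ?thesis
      using primitive_increment_lower_bound[of y x] y p nonneg[of y]
      by (intro mult_left_mono powr_mono2') auto
  next
    case False
    with y nonneg[of y] have "y = x \<or> g y = 0" by auto
    \<comment> \<open>then both sides vanish, since \<open>0 powr (p - 1) = 0\<close>\<close>
    then show ?thesis by auto
  qed
  then show ?thesis
    unfolding power_kernel_integral_powr_eq[OF p(1)] primitive_powr_eq_integral[OF p(1) less_imp_le[OF x]]
    by (intro nn_integral_mono) (auto simp: indicator_def intro!: ennreal_leI)
qed

lemma power_kernel_integral_eq_primitive_powr:
  assumes p: "0 < p" and x: "0 < x"
    and flat: "\<And>y. 0 < y \<Longrightarrow> y \<le> x \<Longrightarrow> 0 < g y \<Longrightarrow> primitive x - primitive y = (x - y) * g y"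
  shows "power_kernel_integral p (\<lambda>y. ennreal (g y powr p)) x = ennreal (primitive x powr p)"
  unfolding power_kernel_integral_powr_eq[OF p] primitive_powr_eq_integral[OF p less_imp_le[OF x]]
proof (intro nn_integral_cong)
  fix y :: real
  show "ennreal (g y * (p * ((x - y) * g y) powr (p - 1))) * indicator {0<..x} y =
      ennreal (g y * (p * (primitive x - primitive y) powr (p - 1))) * indicator {0<..x} y"
    using flat[of y] nonneg[of y] by (cases "y \<in> {0<..x} \<and> 0 < g y") auto
qed

end

context mono_vanishing_nonpos
begin

lemma hardy_lhs_eq:
  "hardy_lhs p \<alpha> g = (\<integral>\<^sup>+x\<in>{0<..}. ennreal (primitive x powr p) * ennreal (x powr (-\<alpha> - 1)) \<partial>lborel)"
  unfolding hardy_lhs_def primitive_def[symmetric]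
proof (intro nn_integral_cong)
  fix x :: real
  show "ennreal (primitive x powr p * x powr - \<alpha> / x) * indicator {0<..} x =
      ennreal (primitive x powr p) * ennreal (x powr (-\<alpha> - 1)) * indicator {0<..} x"
    by (cases "0 < x") (simp_all add: powr_diff ennreal_mult'[symmetric])
qed

lemma hardy_rhs_eq:
  "hardy_rhs p \<alpha> g = (\<integral>\<^sup>+y\<in>{0<..}. ennreal (y powr (p - \<alpha> - 1)) * ennreal (g y powr p) \<partial>lborel)"
  unfolding hardy_rhs_def
proof (intro nn_integral_cong)
  fix y :: real
  show "ennreal ((y * g y) powr p * y powr - \<alpha> / y) * indicator {0<..} y =
      ennreal (y powr (p - \<alpha> - 1)) * ennreal (g y powr p) * indicator {0<..} y"
  proof (cases "0 < y")
    case True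
    have "y powr p * y powr - \<alpha> / y = y powr (p - \<alpha> - 1)"
      using True by (simp add: powr_diff powr_add[symmetric] powr_minus divide_inverse)
    moreover have "(y * g y) powr p = y powr p * g y powr p"
      using True nonneg by (simp add: powr_mult)
    ultimately have "(y * g y) powr p * y powr - \<alpha> / y = y powr (p - \<alpha> - 1) * g y powr p"
      by (metis mult.commute times_divide_eq_left mult.assoc)
    then show ?thesis
      by (simp add: ennreal_mult'[symmetric])
  qed simp
qed

lemma hardy_rhs_eq_power_kernel_integral:
  assumes "0 < p" "p < \<alpha> + 1"
  shows "ennreal (p * Beta p (\<alpha> - p + 1)) * hardy_rhs p \<alpha> g =
    (\<integral>\<^sup>+x\<in>{0<..}. power_kernel_integral p (\<lambda>y. ennreal (g y powr p)) x * ennreal (x powr (-\<alpha> - 1)) \<partial>lborel)"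
  unfolding hardy_rhs_eq by (rule nn_integral_power_kernel_integral_weighted[symmetric]) (use assms in auto)

theorem hardy_lower_bound:
  assumes p: "1 \<le> p" and p_\<alpha>: "p < \<alpha> + 1"
  shows "ennreal (p * Beta p (\<alpha> - p + 1)) * hardy_rhs p \<alpha> g \<le> hardy_lhs p \<alpha> g"
proof -
  have "0 < p"
    using p by simp
  then show ?thesis
    unfolding hardy_rhs_eq_power_kernel_integral[OF \<open>0 < p\<close> p_\<alpha>] hardy_lhs_eq
    using p by (intro nn_integral_mono) (auto simp: indicator_def intro!: mult_right_mono power_kernel_integral_le_primitive_powr)
qed

theorem hardy_upper_bound:
  assumes p: "0 < p" "p \<le> 1" and p_\<alpha>: "p < \<alpha> + 1"
  shows "hardy_lhs p \<alpha> g \<le> ennreal (p * Beta p (\<alpha> - p + 1)) * hardy_rhs p \<alpha> g"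
  unfolding hardy_rhs_eq_power_kernel_integral[OF p(1) p_\<alpha>] hardy_lhs_eq
  using p by (intro nn_integral_mono) (auto simp: indicator_def intro!: mult_right_mono primitive_powr_le_power_kernel_integral)

theorem hardy_equality:
  assumes p: "0 < p" and p_\<alpha>: "p < \<alpha> + 1"
    and flat: "\<And>x y. 0 < y \<Longrightarrow> y \<le> x \<Longrightarrow> 0 < g y \<Longrightarrow> primitive x - primitive y = (x - y) * g y"
  shows "hardy_lhs p \<alpha> g = ennreal (p * Beta p (\<alpha> - p + 1)) * hardy_rhs p \<alpha> g"
  unfolding hardy_rhs_eq_power_kernel_integral[OF p p_\<alpha>] hardy_lhs_eq
  using p flat by (intro nn_integral_cong) (auto simp: indicator_def power_kernel_integral_eq_primitive_powr)

end

lemma hardy_lhs_cong: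
  assumes "\<And>x. 0 < x \<Longrightarrow> f x = h x"
  shows "hardy_lhs p \<alpha> f = hardy_lhs p \<alpha> h"
proof -
  have "(LBINT y:{0<..x}. f y) = (LBINT y:{0<..x}. h y)" for x
    using assms by (intro set_lebesgue_integral_cong) auto
  then show ?thesis
    unfolding hardy_lhs_def by simp
qed

lemma hardy_rhs_cong:
  assumes "\<And>x. 0 < x \<Longrightarrow> f x = h x"
  shows "hardy_rhs p \<alpha> f = hardy_rhs p \<alpha> h"
  unfolding hardy_rhs_def using assms by (intro nn_integral_cong) (auto simp: indicator_def)

lemma mono_vanishing_nonpos_step_function:
  assumes "0 \<le> A" "0 \<le> c"
  shows "mono_vanishing_nonpos (\<lambda>x. A * indicator {c<..} x)"
  using assms by unfold_locales (auto simp: mono_def indicator_def)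

lemma step_primitive_increment:
  assumes "0 \<le> A" "0 \<le> c" and y: "0 < y" "y \<le> x" and jump: "0 < A * indicator {c<..} y"
  shows "mono_vanishing_nonpos.primitive (\<lambda>x. A * indicator {c<..} x) x -
      mono_vanishing_nonpos.primitive (\<lambda>x. A * indicator {c<..} x) y = (x - y) * (A * indicator {c<..} y)"
proof -
  interpret mono_vanishing_nonpos "\<lambda>x. A * indicator {c<..} x"
    using assms(1,2) by (rule mono_vanishing_nonpos_step_function)
  have "c < y"
    using jump by (cases "c < y") auto
  then have "(LBINT t:{y<..x}. A * indicator {c<..} t) = (LBINT t:{y<..x}. A)"
    by (intro set_lebesgue_integral_cong) auto
  also have "\<dots> = (x - y) * A"
    using y by (simp add: set_integral_const measure_lborel_Ioc emeasure_lborel_Ioc)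
  finally show ?thesis
    using primitive_split[of y x] y \<open>c < y\<close> by simp
qed

theorem mainTheorem7:
  fixes p \<alpha> :: real
  assumes "0 < p" and "p \<le> \<alpha>"
  shows "(\<forall>f :: real \<Rightarrow> real.
            set_borel_measurable lborel {0<..} f \<and> (\<forall>x>0. 0 \<le> f x) \<and> mono_on {0<..} f \<longrightarrow>
              (1 \<le> p \<longrightarrow> hardy_lhs p \<alpha> f \<ge> ennreal (p * Beta p (\<alpha> - p + 1)) * hardy_rhs p \<alpha> f) \<and>
              (p \<le> 1 \<longrightarrow> hardy_lhs p \<alpha> f \<le> ennreal (p * Beta p (\<alpha> - p + 1)) * hardy_rhs p \<alpha> f))
       \<and> (\<forall>A c :: real. 0 < A \<and> 0 < c \<longrightarrow>
            hardy_lhs p \<alpha> (\<lambda>x. A * indicator {c<..} x)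
              = ennreal (p * Beta p (\<alpha> - p + 1)) * hardy_rhs p \<alpha> (\<lambda>x. A * indicator {c<..} x))"
proof -
  have p_\<alpha>: "p < \<alpha> + 1"
    using assms(2) by simp
  show ?thesis
  proof (intro conjI allI impI)
    fix f :: "real \<Rightarrow> real"
    assume f: "set_borel_measurable lborel {0<..} f \<and> (\<forall>x>0. 0 \<le> f x) \<and> mono_on {0<..} f"
    define g where "g y = (if 0 < y then f y else 0)" for y
    \<comment> \<open>Monotone functions are Borel.\<close>
    interpret mono_vanishing_nonpos g
      using f by unfold_locales (auto simp: g_def mono_def intro: mono_onD)
    have "hardy_lhs p \<alpha> f = hardy_lhs p \<alpha> g" "hardy_rhs p \<alpha> f = hardy_rhs p \<alpha> g"
      by (simp_all add: g_def cong: hardy_lhs_cong hardy_rhs_cong)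
    then show "1 \<le> p \<Longrightarrow> ennreal (p * Beta p (\<alpha> - p + 1)) * hardy_rhs p \<alpha> f \<le> hardy_lhs p \<alpha> f"
      and "p \<le> 1 \<Longrightarrow> hardy_lhs p \<alpha> f \<le> ennreal (p * Beta p (\<alpha> - p + 1)) * hardy_rhs p \<alpha> f"
      using hardy_lower_bound[OF _ p_\<alpha>] hardy_upper_bound[OF assms(1) _ p_\<alpha>] by simp_all
  next
    fix A c :: real
    assume "0 < A \<and> 0 < c"
    then have "0 \<le> A" "0 \<le> c" by simp_all
    interpret mono_vanishing_nonpos "\<lambda>x. A * indicator {c<..} x"
      using \<open>0 \<le> A\<close> \<open>0 \<le> c\<close> by (rule mono_vanishing_nonpos_step_function)
    show "hardy_lhs p \<alpha> (\<lambda>x. A * indicator {c<..} x) =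
        ennreal (p * Beta p (\<alpha> - p + 1)) * hardy_rhs p \<alpha> (\<lambda>x. A * indicator {c<..} x)"
      by (rule hardy_equality[OF assms(1) p_\<alpha> step_primitive_increment[OF \<open>0 \<le> A\<close> \<open>0 \<le> c\<close>]])
  qed
qed

end
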